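(* Assume that for some $p>1$ there is $\nu_p>0$ with $\mathbb E\{|\omega|^p\mid X\}\le \nu_p$ almost surely; when $p\ge 2$ let moreover $\nu_2>0$ satisfy $\mathbb E\{\omega^2\mid X\}\le\nu_2$ a.s. For $\tau>0$ consider $$g_{0,\tau}\in\operatorname*{argmin}_{g}\ \mathbb E\,\ell_\tau\big(Z(f_0)-\alpha g(X)\big),$$ the minimum being over all measurable $g:\mathbb R^d\to\mathbb R$. If $\tau\ge (4\nu_p)^{1/p}$ when $1<p<2$, or $\tau\ge(4\nu_2)^{1/2}$ when $p\ge 2$, then a minimizer $g_{0,\tau}$ exists, it is unique up to sets of $P_X$-probability zero, and $$\alpha\,\|g_{0,\tau}-g_0\|_\infty\le 2\nu_p\,\tau^{1-p}.$$
   Context: Let $(Y,X)\in\mathbb R\times[0,1]^d$ be a random pair with $X\sim P_X$. Fix $\alpha\in(0,1)$. Let $f_0:[0,1]^d\to\mathbb R$ satisfy $\mathbb P(Y\le f_0(X)\mid X=x)=\alpha$ (conditional $\alpha$-quantile) and $g_0(x)=\alpha^{-1}\mathbb E[Y\mathbb 1\{Y\le f_0(X)\}\mid X=x]$ (conditional expected shortfall). Set $\epsilon=Y-f_0(X)$, $\epsilon_-=\min(\epsilon,0)$ and $\omega=\epsilon_--\mathbb E(\epsilon_-\mid X)$. For $f:[0,1]^d\to\mathbb R$ define the surrogate response $Z(f)=\min\{Y-f(X),0\}+\alpha f(X)$ (so $Z(f_0)=\alpha g_0(X)+\omega$). The Huber loss with parameter $\tau>0$ is $\ell_\tau(u)=\tfrac12u^2\mathbb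 1(|u|\le\tau)+(\tau|u|-\tau^2/2)\mathbb 1(|u|>\tau)$. $\|h\|_\infty=\sup_x|h(x)|$ (essential sup w.r.t. $P_X$). *)

theory Defs
  imports "HOL-Probability.Probability"
begin

definition huber_loss :: "real \<Rightarrow> real \<Rightarrow> real" where
  "huber_loss \<tau> u = (if \<bar>u\<bar> \<le> \<tau> then u\<^sup>2 / 2 else \<tau> * \<bar>u\<bar> - \<tau>\<^sup>2 / 2)"

definition surrogate ::
  "('a \<Rightarrow> real) \<Rightarrow> ('a \<Rightarrow> 'b) \<Rightarrow> real \<Rightarrow> ('b \<Rightarrow> real) \<Rightarrow> 'a \<Rightarrow> real" where
  "surrogate Y X \<alpha> f w = min (Y w - f (X w)) 0 + \<alpha> * f (X w)"

definition sigma_of :: "'a measure \<Rightarrow> ('a \<Rightarrow> 'b::topological_space) \<Rightarrow> 'a measure" where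
  "sigma_of M X = vimage_algebra (space M) X borel"

definition huber_risk ::
  "'a measure \<Rightarrow> ('a \<Rightarrow> 'b) \<Rightarrow> ('a \<Rightarrow> real) \<Rightarrow> real \<Rightarrow> real \<Rightarrow> ('b \<Rightarrow> real) \<Rightarrow> ennreal" where
  "huber_risk M X Z \<alpha> \<tau> g = (\<integral>\<^sup>+ w. ennreal (huber_loss \<tau> (Z w - \<alpha> * g (X w))) \<partial>M)"

definition huber_argmin ::
  "'a measure \<Rightarrow> ('a \<Rightarrow> 'b::topological_space) \<Rightarrow> ('a \<Rightarrow> real) \<Rightarrow> real \<Rightarrow> real \<Rightarrow> ('b \<Rightarrow> real) \<Rightarrow> bool" where
  "huber_argmin M X Z \<alpha> \<tau> g \<longleftrightarrow> g \<in> borel_measurable borel \<and>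
     (\<forall>h \<in> borel_measurable borel. huber_risk M X Z \<alpha> \<tau> g \<le> huber_risk M X Z \<alpha> \<tau> h)"

end

theory Submission
  imports Defs
begin

text \<open>Write \<open>W = \<omega>\<close> and \<open>u = \<alpha> (g \<circ> X - g\<^sub>0 \<circ> X)\<close>, so that the risk of \<open>g\<close> is
  \<open>E \<ell>\<^sub>\<tau>(W - u)\<close>, to be minimised over \<open>\<sigma>(X)\<close>-measurable \<open>u\<close>. As \<open>\<ell>\<^sub>\<tau>\<close> is convex with
  derivative the clipping map \<open>\<psi>\<^sub>\<tau>\<close>, a bounded root \<open>h\<close> of the conditional score,
  \<open>E[\<psi>\<^sub>\<tau>(W - h) | X] = 0\<close>, is a minimiser, and another minimiser can differ from \<open>h\<close> only
  where \<open>|W - h| \<ge> \<tau>\<close>, an event which the conditional moment bound keeps below conditional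
  probability one. The moment bounds also give \<open>E[\<psi>\<^sub>\<tau>(W - L) | X] \<le> 0 \<le> E[\<psi>\<^sub>\<tau>(W + L) | X]\<close>
  for some \<open>L \<le> 2 \<nu>\<^sub>p \<tau> powr (1 - p)\<close>; since \<open>h \<mapsto> h + E[\<psi>\<^sub>\<tau>(W - h) | X]\<close> is monotone,
  iterating it from \<open>-L\<close> produces such a root with \<open>|h| \<le> L\<close>, which is the claimed bound.\<close>

section \<open>Huber loss and its derivative\<close>

text \<open>The derivative of \<open>huber_loss \<tau>\<close>: clipping to \<open>[-\<tau>, \<tau>]\<close>.\<close>

definition huber_psi :: "real \<Rightarrow> real \<Rightarrow> real" where
  "huber_psi \<tau> x = max (- \<tau>) (min \<tau> x)"

lemma huber_psi_abs_le: "0 \<le> \<tau> \<Longrightarrow> \<bar>huber_psi \<tau> x\<bar> \<le> \<tau>"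
  unfolding huber_psi_def by auto

lemma huber_psi_eq_self: "\<bar>x\<bar> \<le> \<tau> \<Longrightarrow> huber_psi \<tau> x = x"
  unfolding huber_psi_def by auto

lemma huber_psi_uminus: "0 \<le> \<tau> \<Longrightarrow> huber_psi \<tau> (- x) = - huber_psi \<tau> x"
  unfolding huber_psi_def by (auto simp: max_def min_def)

lemma huber_psi_mono: "x \<le> y \<Longrightarrow> huber_psi \<tau> x \<le> huber_psi \<tau> y"
  unfolding huber_psi_def by auto

lemma huber_psi_lipschitz: "\<bar>huber_psi \<tau> x - huber_psi \<tau> y\<bar> \<le> \<bar>x - y\<bar>"
  unfolding huber_psi_def by auto

lemma add_huber_psi_diff_mono: "a \<le> b \<Longrightarrow> a + huber_psi \<tau> (x - a) \<le> b + huber_psi \<tau> (x - b)"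
  unfolding huber_psi_def by auto

lemma huber_psi_le_add_neg_part: "huber_psi \<tau> x \<le> x + max 0 (- x - \<tau>)"
  unfolding huber_psi_def by auto

lemma borel_measurable_huber_psi [measurable (raw)]:
  assumes [measurable]: "f \<in> borel_measurable M"
  shows "(\<lambda>x. huber_psi \<tau> (f x)) \<in> borel_measurable M"
  unfolding huber_psi_def by measurable

lemma borel_measurable_huber_loss [measurable (raw)]:
  assumes [measurable]: "f \<in> borel_measurable M"
  shows "(\<lambda>x. huber_loss \<tau> (f x)) \<in> borel_measurable M"
  unfolding huber_loss_def by measurable

lemma huber_loss_nonneg:
  assumes "0 \<le> \<tau>"
  shows "0 \<le> huber_loss \<tau> x"
proof (cases "\<bar>x\<bar> \<le> \<tau>")
  case True
  then show ?thesis by (simp add: huber_loss_def)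
next
  case False
  then have "\<tau>\<^sup>2 \<le> \<tau> * \<bar>x\<bar>" using assms by (simp add: power2_eq_square mult_left_mono)
  moreover have "huber_loss \<tau> x = \<tau> * \<bar>x\<bar> - \<tau>\<^sup>2 / 2" using False by (simp add: huber_loss_def)
  moreover have "0 \<le> \<tau>\<^sup>2" by simp
  ultimately show ?thesis by linarith
qed

lemma huber_loss_le_abs:
  assumes "0 \<le> \<tau>"
  shows "huber_loss \<tau> x \<le> \<tau> * \<bar>x\<bar>"
proof (cases "\<bar>x\<bar> \<le> \<tau>")
  case True
  then have "x\<^sup>2 \<le> \<tau> * \<bar>x\<bar>"
    by (metis abs_ge_zero abs_mult_self_eq mult_right_mono power2_eq_square)
  moreover have "huber_loss \<tau> x = x\<^sup>2 / 2" using True by (simp add: huber_loss_def)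
  moreover have "0 \<le> \<tau> * \<bar>x\<bar>" using assms by simp
  ultimately show ?thesis by linarith
next
  case False
  then show ?thesis using assms by (simp add: huber_loss_def)
qed

lemma abs_le_huber_loss: "\<tau> * \<bar>x\<bar> \<le> huber_loss \<tau> x + \<tau>\<^sup>2 / 2"
proof -
  have "0 \<le> (\<bar>x\<bar> - \<tau>)\<^sup>2" by simp
  then show ?thesis
    unfolding huber_loss_def by (auto simp: power2_eq_square algebra_simps abs_mult_self_eq)
qed

lemma huber_loss_tangent_gap:
  assumes "\<bar>a\<bar> \<le> \<tau>"
  shows "(huber_psi \<tau> b - a)\<^sup>2 / 2 \<le> huber_loss \<tau> b - huber_loss \<tau> a - a * (b - a)"
proof -
  consider "\<bar>b\<bar> \<le> \<tau>" | "\<tau> < b" | "b < - \<tau>" by linarith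
  then show ?thesis
  proof cases
    case 1
    then show ?thesis using assms
      unfolding huber_loss_def huber_psi_def by (auto simp: power2_eq_square field_simps)
  next
    case 2
    have "0 \<le> (b - \<tau>) * (\<tau> - a)" using 2 assms by simp
    then show ?thesis using 2 assms
      unfolding huber_loss_def huber_psi_def by (auto simp: power2_eq_square field_simps)
  next
    case 3
    have "0 \<le> (- b - \<tau>) * (\<tau> + a)" using 3 assms by simp
    then show ?thesis using 3 assms
      unfolding huber_loss_def huber_psi_def by (auto simp: power2_eq_square field_simps)
  qed
qed

lemma huber_loss_tangent:
  assumes "0 \<le> \<tau>"
  shows "huber_loss \<tau> a + huber_psi \<tau> a * (b - a) \<le> huber_loss \<tau> b"
proof (cases "\<bar>a\<bar> \<le> \<tau>")
  case True
  then have psi_a: "huber_psi \<tau> a = a" by (rule huber_psi_eq_self)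
  have "0 \<le> (huber_psi \<tau> b - a)\<^sup>2 / 2" by simp
  then show ?thesis unfolding psi_a using huber_loss_tangent_gap[OF True, of b] by linarith
next
  case False
  have psi_a: "huber_psi \<tau> a * a = \<tau> * \<bar>a\<bar>"
    using False assms by (cases "0 \<le> a") (auto simp: huber_psi_def min_def max_def)
  have "huber_psi \<tau> a * b \<le> \<bar>huber_psi \<tau> a\<bar> * \<bar>b\<bar>" by (metis abs_ge_self abs_mult)
  also have "\<dots> \<le> \<tau> * \<bar>b\<bar>" using huber_psi_abs_le[OF assms] by (intro mult_right_mono) auto
  finally have "huber_psi \<tau> a * b \<le> \<tau> * \<bar>b\<bar>" .
  moreover have "huber_loss \<tau> a = \<tau> * \<bar>a\<bar> - \<tau>\<^sup>2 / 2" using False by (simp add: huber_loss_def)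
  ultimately show ?thesis
    using abs_le_huber_loss[of \<tau> b] psi_a unfolding right_diff_distrib by linarith
qed

lemma huber_loss_tangent_strict:
  assumes "\<bar>a\<bar> < \<tau>" and "a \<noteq> b"
  shows "huber_loss \<tau> a + huber_psi \<tau> a * (b - a) < huber_loss \<tau> b"
proof -
  have psi_a: "huber_psi \<tau> a = a" using assms by (simp add: huber_psi_eq_self)
  have "huber_psi \<tau> b \<noteq> a" using assms unfolding huber_psi_def by auto
  then have "0 < (huber_psi \<tau> b - a)\<^sup>2 / 2" by simp
  moreover have "(huber_psi \<tau> b - a)\<^sup>2 / 2 \<le> huber_loss \<tau> b - huber_loss \<tau> a - a * (b - a)"
    using assms by (intro huber_loss_tangent_gap) auto
  ultimately show ?thesis unfolding psi_a by linarith
qed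

lemma neg_part_le_powr:
  fixes x b p :: real
  assumes "0 < b" and "1 \<le> p"
  shows "max 0 (- x - b) \<le> \<bar>x\<bar> powr p * b powr (1 - p)"
proof (cases "\<bar>x\<bar> \<le> b")
  case True
  then show ?thesis by simp
next
  case False
  then have "1 \<le> (\<bar>x\<bar> / b) powr (p - 1)"
    using assms by (intro ge_one_powr_ge_zero) auto
  then have "\<bar>x\<bar> \<le> \<bar>x\<bar> * (\<bar>x\<bar> / b) powr (p - 1)"
    by (simp add: mult_le_cancel_left1)
  also have "\<dots> = \<bar>x\<bar> powr p * b powr (1 - p)"
    using False assms by (simp add: powr_divide powr_diff powr_minus_divide divide_simps powr_mult_base')
  finally show ?thesis using assms by auto
qed

lemma neg_part_le_square:
  fixes x b :: real
  assumes "0 < b"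
  shows "max 0 (- x - b) \<le> x\<^sup>2 / (4 * b)"
proof -
  have "4 * b * (- x - b) \<le> x\<^sup>2"
    using zero_le_power2[of "x + 2 * b"] by (simp add: power2_eq_square algebra_simps)
  then show ?thesis using assms by (simp add: field_simps)
qed

text \<open>Shifting the argument by \<open>L\<close> shifts \<open>huber_psi\<close> by \<open>L\<close> except where \<open>\<bar>x\<bar> \<ge> \<tau> - L\<close>,
  and there the quadratic term pays for the difference.\<close>

lemma huber_psi_diff_le:
  fixes x L \<tau> :: real
  assumes "0 \<le> L" "L < \<tau>"
  shows "huber_psi \<tau> (x - L) \<le> huber_psi \<tau> x - L + L * x\<^sup>2 / (\<tau> - L)\<^sup>2"
proof (cases "L - \<tau> \<le> x \<and> x \<le> \<tau>")
  case True
  then show ?thesis using assms by (simp add: huber_psi_def)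
next
  case False
  then have "(\<tau> - L)\<^sup>2 \<le> \<bar>x\<bar>\<^sup>2" using assms by (intro power_mono) auto
  then have "L \<le> L * x\<^sup>2 / (\<tau> - L)\<^sup>2" using assms by (simp add: field_simps mult_left_mono)
  moreover have "huber_psi \<tau> (x - L) \<le> huber_psi \<tau> x" using assms by (intro huber_psi_mono) auto
  ultimately show ?thesis by simp
qed

section \<open>Conditional expectations\<close>

context finite_measure_subalgebra
begin

lemma integrable_of_nn_cond_exp_le:
  assumes [measurable]: "f \<in> borel_measurable M" and "\<And>w. 0 \<le> f w"
    and "AE w in M. nn_cond_exp M F (\<lambda>w. ennreal (f w)) w \<le> ennreal \<nu>"
  shows "integrable M f"
proof (rule integrableI_nonneg)
  have "(\<integral>\<^sup>+ w. ennreal (f w) \<partial>M) = (\<integral>\<^sup>+ w. 1 * nn_cond_exp M F (\<lambda>w. ennreal (f w)) w \<partial>M)"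
    by (subst nn_cond_exp_intg) auto
  also have "\<dots> \<le> (\<integral>\<^sup>+ w. ennreal \<nu> \<partial>M)"
    by (rule nn_integral_mono_AE) (use assms(3) in auto)
  also have "\<dots> < \<infinity>"
    by (simp add: ennreal_mult_eq_top_iff less_top[symmetric])
  finally show "(\<integral>\<^sup>+ w. ennreal (f w) \<partial>M) < \<infinity>" .
qed (use assms in auto)

lemma real_cond_exp_le_of_nn_cond_exp_le:
  assumes "0 \<le> \<nu>" and "AE w in M. nn_cond_exp M F (\<lambda>w. ennreal (f w)) w \<le> ennreal \<nu>"
  shows "AE w in M. real_cond_exp M F f w \<le> \<nu>"
  using assms(2)
proof eventually_elim
  case (elim w)
  have "real_cond_exp M F f w \<le> enn2real (nn_cond_exp M F (\<lambda>w. ennreal (f w)) w)"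
    unfolding real_cond_exp_def by simp
  also have "\<dots> \<le> \<nu>" by (rule enn2real_leI[OF assms(1) elim])
  finally show ?case .
qed

lemma real_cond_exp_centered:
  assumes "integrable M f"
  shows "AE w in M. real_cond_exp M F (\<lambda>w. f w - real_cond_exp M F f w) w = 0"
proof -
  have "integrable M (real_cond_exp M F f)" using assms by (rule real_cond_exp_int(1))
  then have "AE w in M. real_cond_exp M F (real_cond_exp M F f) w = real_cond_exp M F f w"
    by (rule real_cond_exp_F_meas) simp
  with real_cond_exp_diff[OF assms \<open>integrable M (real_cond_exp M F f)\<close>] show ?thesis
    by eventually_elim simp
qed

lemma real_cond_exp_add_add_const:
  assumes "integrable M f" "integrable M g"
  shows "AE w in M. real_cond_exp M F (\<lambda>w. f w + g w + c) w
    = real_cond_exp M F f w + real_cond_exp M F g w + c"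
proof -
  have "integrable M (\<lambda>w. f w + g w)" using assms by simp
  from real_cond_exp_add[OF this integrable_const[of c]] real_cond_exp_add[OF assms]
    real_cond_exp_F_meas[OF integrable_const[of c] borel_measurable_const]
  show ?thesis by eventually_elim simp
qed

text \<open>The expected-shortfall identity behind \<open>Z(f\<^sub>0) = \<alpha> g\<^sub>0(X) + \<omega>\<close>.\<close>

lemma real_cond_exp_min_diff_0:
  fixes Y q :: "'a \<Rightarrow> real"
  assumes [measurable]: "Y \<in> borel_measurable M" and q_F [measurable]: "q \<in> borel_measurable F"
    and "integrable M (\<lambda>w. Y w * indicator {w. Y w \<le> q w} w)"
    and "integrable M (\<lambda>w. min (Y w - q w) 0)"
    and "AE w in M. real_cond_exp M F (indicator {w. Y w \<le> q w}) w = \<alpha>"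
  shows "AE w in M. real_cond_exp M F (\<lambda>w. min (Y w - q w) 0) w
    = real_cond_exp M F (\<lambda>w. Y w * indicator {w. Y w \<le> q w} w) w - \<alpha> * q w"
proof -
  define S where "S = {w. Y w \<le> q w}"
  have q_M [measurable]: "q \<in> borel_measurable M" by (rule measurable_from_subalg[OF subalg q_F])
  have "S \<inter> space M \<in> sets M"
    unfolding S_def by (simp add: Int_commute[of _ "space M"])
  then have [measurable]: "(indicator S :: 'a \<Rightarrow> real) \<in> borel_measurable M"
    by (subst borel_measurable_indicator_iff)
  have min_eq: "min (Y w - q w) 0 = Y w * indicator S w - q w * indicator S w" for w
    by (auto simp: S_def indicator_def min_def)
  have "integrable M (\<lambda>w. Y w * indicator S w - min (Y w - q w) 0)"
    using assms(3,4) unfolding S_def by simp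
  then have int_q: "integrable M (\<lambda>w. q w * indicator S w)" unfolding min_eq by simp
  have "AE w in M. real_cond_exp M F (\<lambda>w. q w * indicator S w) w = q w * real_cond_exp M F (indicator S) w"
    by (rule real_cond_exp_mult) (use int_q in auto)
  with real_cond_exp_diff[OF assms(3)[folded S_def] int_q] assms(5) show ?thesis
    unfolding min_eq S_def by eventually_elim (simp add: mult.commute)
qed

text \<open>A conditional Markov inequality: \<open>\<P>(f \<ge> K | F) < 1\<close> almost surely.\<close>

lemma null_sets_of_real_cond_exp_le:
  assumes f: "integrable M f" and ce: "AE w in M. real_cond_exp M F f w \<le> \<nu>" and "\<nu> < K"
    and B: "B \<in> sets F" and big: "AE w in M. w \<in> B \<longrightarrow> K \<le> f w"
  shows "B \<in> null_sets M"
proof -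
  have BM [measurable]: "B \<in> sets M" using B subalg by (auto simp: subalgebra_def)
  have int_ind: "integrable M (\<lambda>w. c * indicator B w)" for c :: real
    by (intro integrable_mult_right integrable_real_indicator) (auto simp: less_top[symmetric])
  have int_f: "integrable M (\<lambda>w. indicator B w * f w)"
    using integrable_real_mult_indicator[OF BM f] by (simp add: mult.commute)
  have "K * measure M B = (\<integral> w. K * indicator B w \<partial>M)" using BM by simp
  also have "\<dots> \<le> (\<integral> w. indicator B w * f w \<partial>M)"
    by (rule integral_mono_AE[OF int_ind int_f]) (use big in \<open>auto split: split_indicator\<close>)
  also have "\<dots> = (\<integral> w. indicator B w * real_cond_exp M F f w \<partial>M)"
    by (rule real_cond_exp_intg(2)[symmetric]) (use int_f B f in auto)
  also have "\<dots> \<le> (\<integral> w. \<nu> * indicator B w \<partial>M)"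
    by (rule integral_mono_AE[OF real_cond_exp_intg(1) int_ind])
       (use int_f B f ce in \<open>auto split: split_indicator\<close>)
  also have "\<dots> = \<nu> * measure M B" using BM by simp
  finally have "measure M B = 0"
    using \<open>\<nu> < K\<close> measure_nonneg[of M B] by (metis antisym mult_le_cancel_right not_le)
  then show ?thesis using BM by (simp add: emeasure_eq_measure null_sets_def)
qed

lemma real_cond_exp_lincomb_le:
  assumes f: "integrable M f" and g: "integrable M g"
    and "AE w in M. real_cond_exp M F f w \<le> a" "AE w in M. real_cond_exp M F g w \<le> b"
    and "0 \<le> c" "0 \<le> d"
  shows "AE w in M. real_cond_exp M F (\<lambda>w. c * f w + d * g w) w \<le> c * a + d * b"
proof -
  have "integrable M (\<lambda>w. c * f w)" "integrable M (\<lambda>w. d * g w)" using f g by simp_all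
  from real_cond_exp_add[OF this] real_cond_exp_cmult[OF f, of c] real_cond_exp_cmult[OF g, of d]
    assms(3,4)
  show ?thesis
  proof eventually_elim
    case (elim w)
    then show ?case
      using mult_left_mono[OF elim(4) \<open>0 \<le> c\<close>] mult_left_mono[OF elim(5) \<open>0 \<le> d\<close>] by simp
  qed
qed

lemma cond_huber_psi_bracket:
  fixes W :: "'a \<Rightarrow> real" and r :: "real \<Rightarrow> real"
  assumes W: "integrable M W" and W_centered: "AE w in M. real_cond_exp M F W w = 0"
    and r: "integrable M (\<lambda>w. r (W w))" and r_le: "AE w in M. real_cond_exp M F (\<lambda>w. r (W w)) w \<le> L"
    and "0 \<le> \<tau>" and psi_le: "\<And>x. huber_psi \<tau> (x - L) \<le> x - L + r x" and r_even: "\<And>x. r (- x) = r x"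
  shows "AE w in M. real_cond_exp M F (\<lambda>w. huber_psi \<tau> (W w - L)) w \<le> 0"
    and "AE w in M. 0 \<le> real_cond_exp M F (\<lambda>w. huber_psi \<tau> (W w + L)) w"
proof -
  have [measurable]: "W \<in> borel_measurable M" using W by auto
  have int_psi: "integrable M (\<lambda>w. huber_psi \<tau> (W w - L))" "integrable M (\<lambda>w. huber_psi \<tau> (W w + L))"
    by (rule integrable_const_bound[where B=\<tau>]; use \<open>0 \<le> \<tau>\<close> huber_psi_abs_le in simp)+
  have "huber_psi \<tau> (W w - L) \<le> W w + r (W w) + - L" for w
    using psi_le[of "W w"] by simp
  then have "AE w in M. real_cond_exp M F (\<lambda>w. huber_psi \<tau> (W w - L)) w
      \<le> real_cond_exp M F (\<lambda>w. W w + r (W w) + - L) w"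
    by (intro real_cond_exp_mono) (use int_psi W r in auto)
  with real_cond_exp_add_add_const[OF W r, of "- L"] W_centered r_le
  show "AE w in M. real_cond_exp M F (\<lambda>w. huber_psi \<tau> (W w - L)) w \<le> 0"
    by eventually_elim simp
  \<comment> \<open>\<open>huber_psi\<close> is odd and \<open>r\<close> even, so the bound at \<open>-W\<close> is a lower bound at \<open>W + L\<close>.\<close>
  have "W w + - r (W w) + L \<le> huber_psi \<tau> (W w + L)" for w
    using psi_le[of "- W w"] huber_psi_uminus[OF \<open>0 \<le> \<tau>\<close>, of "W w + L"] r_even[of "W w"] by simp
  then have "AE w in M. real_cond_exp M F (\<lambda>w. W w + - r (W w) + L) w
      \<le> real_cond_exp M F (\<lambda>w. huber_psi \<tau> (W w + L)) w"
    by (intro real_cond_exp_mono) (use int_psi W r in auto)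
  with real_cond_exp_add_add_const[OF W integrable_minus[OF r], of L] real_cond_exp_cmult[OF r, of "-1"]
    W_centered r_le
  show "AE w in M. 0 \<le> real_cond_exp M F (\<lambda>w. huber_psi \<tau> (W w + L)) w"
    by eventually_elim simp
qed

end

section \<open>The conditional Huber problem\<close>

locale huber_problem = finite_measure_subalgebra M F for M F :: "'a measure" +
  fixes W :: "'a \<Rightarrow> real" and \<tau> :: real
  assumes integrable_W: "integrable M W" and tau_pos: "0 < \<tau>"
begin

lemma borel_measurable_W [measurable]: "W \<in> borel_measurable M"
  using integrable_W by auto

definition risk :: "('a \<Rightarrow> real) \<Rightarrow> ennreal" where
  "risk u = (\<integral>\<^sup>+ w. ennreal (huber_loss \<tau> (W w - u w)) \<partial>M)"

definition cond_score :: "('a \<Rightarrow> real) \<Rightarrow> 'a \<Rightarrow> real" where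
  "cond_score u = real_cond_exp M F (\<lambda>w. huber_psi \<tau> (W w - u w))"

definition huber_gap :: "('a \<Rightarrow> real) \<Rightarrow> ('a \<Rightarrow> real) \<Rightarrow> 'a \<Rightarrow> real" where
  "huber_gap h u w =
    huber_loss \<tau> (W w - u w) - huber_loss \<tau> (W w - h w) - (h w - u w) * huber_psi \<tau> (W w - h w)"

text \<open>\<open>\<P>(\<bar>W\<bar> \<ge> r | F) < 1\<close> almost surely, phrased without conditional probabilities: no
  non-null \<open>F\<close>-event forces \<open>\<bar>W\<bar> \<ge> r\<close>.\<close>

definition cond_tail_lt_one :: "real \<Rightarrow> bool" where
  "cond_tail_lt_one r \<longleftrightarrow> (\<forall>B \<in> sets F. (AE w in M. w \<in> B \<longrightarrow> r \<le> \<bar>W w\<bar>) \<longrightarrow> B \<in> null_sets M)"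

lemma huber_gap_nonneg: "0 \<le> huber_gap h u w"
  using huber_loss_tangent[of \<tau> "W w - h w" "W w - u w"] tau_pos
  unfolding huber_gap_def by (simp add: algebra_simps)

lemma huber_gap_pos: "\<bar>W w - h w\<bar> < \<tau> \<Longrightarrow> u w \<noteq> h w \<Longrightarrow> 0 < huber_gap h u w"
  using huber_loss_tangent_strict[of "W w - h w" \<tau> "W w - u w"]
  unfolding huber_gap_def by (simp add: algebra_simps)

lemma integrable_huber_psi: "u \<in> borel_measurable M \<Longrightarrow> integrable M (\<lambda>w. huber_psi \<tau> (W w - u w))"
  by (rule integrable_const_bound[where B=\<tau>]) (use tau_pos huber_psi_abs_le in auto)

lemma integrable_huber_loss:
  assumes [measurable]: "u \<in> borel_measurable M" and u_le: "\<And>w. \<bar>u w\<bar> \<le> B"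
  shows "integrable M (\<lambda>w. huber_loss \<tau> (W w - u w))"
proof (rule Bochner_Integration.integrable_bound)
  show "integrable M (\<lambda>w. \<tau> * (\<bar>W w\<bar> + B))" using integrable_W by auto
  have "\<bar>huber_loss \<tau> (W w - u w)\<bar> \<le> \<bar>\<tau> * (\<bar>W w\<bar> + B)\<bar>" for w
  proof -
    have "huber_loss \<tau> (W w - u w) \<le> \<tau> * \<bar>W w - u w\<bar>" using tau_pos by (simp add: huber_loss_le_abs)
    also have "\<dots> \<le> \<tau> * (\<bar>W w\<bar> + B)" using tau_pos u_le[of w] by (intro mult_left_mono) auto
    finally have "huber_loss \<tau> (W w - u w) \<le> \<tau> * (\<bar>W w\<bar> + B)" .
    moreover have "0 \<le> huber_loss \<tau> (W w - u w)" using tau_pos by (simp add: huber_loss_nonneg)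
    ultimately show ?thesis by simp
  qed
  then show "AE w in M. norm (huber_loss \<tau> (W w - u w)) \<le> norm (\<tau> * (\<bar>W w\<bar> + B))" by simp
qed measurable

lemma risk_eq_integral:
  "integrable M (\<lambda>w. huber_loss \<tau> (W w - u w)) \<Longrightarrow> risk u = ennreal (\<integral> w. huber_loss \<tau> (W w - u w) \<partial>M)"
  unfolding risk_def by (rule nn_integral_eq_integral) (use huber_loss_nonneg tau_pos in auto)

lemma integrable_of_risk_finite:
  assumes [measurable]: "u \<in> borel_measurable M" and "risk u < \<infinity>"
  shows "integrable M (\<lambda>w. huber_loss \<tau> (W w - u w))" and "integrable M u"
proof -
  show loss: "integrable M (\<lambda>w. huber_loss \<tau> (W w - u w))"
    by (rule integrableI_nonneg) (use assms huber_loss_nonneg tau_pos in \<open>auto simp: risk_def\<close>)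
  let ?bound = "\<lambda>w. \<bar>W w\<bar> + (huber_loss \<tau> (W w - u w) + \<tau>\<^sup>2 / 2) / \<tau>"
  show "integrable M u"
  proof (rule Bochner_Integration.integrable_bound)
    show "integrable M ?bound" using integrable_W loss by auto
    have "\<bar>u w\<bar> \<le> ?bound w" for w
    proof -
      have "\<bar>W w - u w\<bar> \<le> (huber_loss \<tau> (W w - u w) + \<tau>\<^sup>2 / 2) / \<tau>"
        using abs_le_huber_loss[of \<tau> "W w - u w"] tau_pos by (simp add: pos_le_divide_eq mult.commute)
      then show ?thesis by linarith
    qed
    then show "AE w in M. norm (u w) \<le> norm (?bound w)"
      by (intro AE_I2) (metis abs_ge_self order_trans real_norm_def)
  qed simp
qed

lemma cond_score_lipschitz:
  assumes "a \<in> borel_measurable F" "\<And>w. \<bar>a w\<bar> \<le> B" "b \<in> borel_measurable F" "\<And>w. \<bar>b w\<bar> \<le> B"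
  shows "AE w in M. \<bar>cond_score a w - cond_score b w\<bar> \<le> \<bar>a w - b w\<bar>"
proof -
  have one_sided: "AE w in M. cond_score a w \<le> cond_score b w + \<bar>a w - b w\<bar>"
    if [measurable]: "a \<in> borel_measurable F" "b \<in> borel_measurable F"
      and a_le: "\<And>w. \<bar>a w\<bar> \<le> B" and b_le: "\<And>w. \<bar>b w\<bar> \<le> B" for a b
  proof -
    have M_meas [measurable]: "a \<in> borel_measurable M" "b \<in> borel_measurable M"
      using that(1,2) by (auto intro: measurable_from_subalg[OF subalg])
    have int_diff: "integrable M (\<lambda>w. \<bar>a w - b w\<bar>)"
    proof (rule integrable_const_bound[where B="2 * B"])
      have "\<bar>a w - b w\<bar> \<le> 2 * B" for w
        using abs_triangle_ineq4[of "a w" "b w"] a_le[of w] b_le[of w] by linarith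
      then show "AE w in M. norm \<bar>a w - b w\<bar> \<le> 2 * B" by simp
    qed measurable
    have "huber_psi \<tau> (W w - a w) \<le> huber_psi \<tau> (W w - b w) + \<bar>a w - b w\<bar>" for w
      using abs_le_D1[OF huber_psi_lipschitz, of \<tau> "W w - a w" "W w - b w"]
      by (simp add: abs_minus_commute)
    then have "AE w in M. cond_score a w \<le> real_cond_exp M F (\<lambda>w. huber_psi \<tau> (W w - b w) + \<bar>a w - b w\<bar>) w"
      unfolding cond_score_def
      by (intro real_cond_exp_mono) (use integrable_huber_psi int_diff in auto)
    moreover have "AE w in M. real_cond_exp M F (\<lambda>w. \<bar>a w - b w\<bar>) w = \<bar>a w - b w\<bar>"
      by (rule real_cond_exp_F_meas[OF int_diff]) measurable
    ultimately show ?thesis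
      using real_cond_exp_add[OF integrable_huber_psi[OF M_meas(2)] int_diff] unfolding cond_score_def
      by eventually_elim simp
  qed
  from one_sided[OF assms(1,3,2,4)] one_sided[OF assms(3,1,4,2)] show ?thesis
    by eventually_elim (auto simp: abs_le_iff abs_minus_commute)
qed

lemma integral_cross_term_eq_0:
  assumes h [measurable]: "h \<in> borel_measurable F" and h_le: "\<And>w. \<bar>h w\<bar> \<le> B"
    and root: "AE w in M. cond_score h w = 0"
    and u [measurable]: "u \<in> borel_measurable F" and "integrable M u"
  shows "integrable M (\<lambda>w. (h w - u w) * huber_psi \<tau> (W w - h w))"
    and "(\<integral> w. (h w - u w) * huber_psi \<tau> (W w - h w) \<partial>M) = 0"
proof -
  have [measurable]: "h \<in> borel_measurable M" "u \<in> borel_measurable M"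
    using h u by (auto intro: measurable_from_subalg[OF subalg])
  have "integrable M h" by (rule integrable_const_bound[where B=B]) (use h_le in auto)
  with \<open>integrable M u\<close> have int_hu: "integrable M (\<lambda>w. \<tau> * (h w - u w))" by auto
  show int: "integrable M (\<lambda>w. (h w - u w) * huber_psi \<tau> (W w - h w))"
  proof (rule Bochner_Integration.integrable_bound[OF int_hu])
    have "\<bar>h w - u w\<bar> * \<bar>huber_psi \<tau> (W w - h w)\<bar> \<le> \<bar>h w - u w\<bar> * \<tau>" for w
      using huber_psi_abs_le tau_pos by (intro mult_left_mono) auto
    then show "AE w in M. norm ((h w - u w) * huber_psi \<tau> (W w - h w)) \<le> norm (\<tau> * (h w - u w))"
      using tau_pos by (auto simp: abs_mult mult.commute)
  qed measurable
  have "(\<integral> w. (h w - u w) * huber_psi \<tau> (W w - h w) \<partial>M) = (\<integral> w. (h w - u w) * cond_score h w \<partial>M)"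
    unfolding cond_score_def by (rule real_cond_exp_intg(2)[symmetric, OF int]) measurable
  also have "\<dots> = 0"
    by (rule integral_eq_zero_AE) (use root in auto)
  finally show "(\<integral> w. (h w - u w) * huber_psi \<tau> (W w - h w) \<partial>M) = 0" .
qed

lemma integral_huber_loss_eq_add_gap:
  assumes h [measurable]: "h \<in> borel_measurable F" and h_le: "\<And>w. \<bar>h w\<bar> \<le> B"
    and root: "AE w in M. cond_score h w = 0"
    and u [measurable]: "u \<in> borel_measurable F" and "risk u < \<infinity>"
  shows "integrable M (huber_gap h u)"
    and "(\<integral> w. huber_loss \<tau> (W w - u w) \<partial>M)
      = (\<integral> w. huber_loss \<tau> (W w - h w) \<partial>M) + (\<integral> w. huber_gap h u w \<partial>M)"
proof -
  have hu_M [measurable]: "h \<in> borel_measurable M" "u \<in> borel_measurable M"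
    using h u by (auto intro: measurable_from_subalg[OF subalg])
  note u_int = integrable_of_risk_finite[OF hu_M(2) \<open>risk u < \<infinity>\<close>]
  note h_int = integrable_huber_loss[OF hu_M(1) h_le]
  note cross = integral_cross_term_eq_0[OF h h_le root u u_int(2)]
  show "integrable M (huber_gap h u)"
    unfolding huber_gap_def[abs_def] using u_int h_int cross by auto
  then show "(\<integral> w. huber_loss \<tau> (W w - u w) \<partial>M)
      = (\<integral> w. huber_loss \<tau> (W w - h w) \<partial>M) + (\<integral> w. huber_gap h u w \<partial>M)"
    unfolding huber_gap_def[abs_def] using u_int h_int cross by simp
qed

lemma risk_le_of_cond_score_eq_0:
  assumes "h \<in> borel_measurable F" "\<And>w. \<bar>h w\<bar> \<le> B" "AE w in M. cond_score h w = 0"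
    and u: "u \<in> borel_measurable F"
  shows "risk h \<le> risk u"
proof (cases "risk u < \<infinity>")
  case True
  have hu_M [measurable]: "h \<in> borel_measurable M" "u \<in> borel_measurable M"
    using assms by (auto intro: measurable_from_subalg[OF subalg])
  note gap = integral_huber_loss_eq_add_gap[OF assms True]
  have "0 \<le> (\<integral> w. huber_gap h u w \<partial>M)" by (simp add: huber_gap_nonneg)
  with gap(2) have "(\<integral> w. huber_loss \<tau> (W w - h w) \<partial>M) \<le> (\<integral> w. huber_loss \<tau> (W w - u w) \<partial>M)"
    by simp
  then show ?thesis
    using risk_eq_integral[OF integrable_huber_loss[OF hu_M(1) assms(2)]]
      risk_eq_integral[OF integrable_of_risk_finite(1)[OF hu_M(2) True]] by (simp add: ennreal_leI)
qed (simp add: not_less top_unique)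

lemma ae_eq_of_risk_le:
  assumes h [measurable]: "h \<in> borel_measurable F" and h_le: "\<And>w. \<bar>h w\<bar> \<le> L"
    and root: "AE w in M. cond_score h w = 0"
    and u [measurable]: "u \<in> borel_measurable F" and risk_le: "risk u \<le> risk h"
    and tail: "cond_tail_lt_one (\<tau> - L)"
  shows "AE w in M. u w = h w"
proof -
  have hu_M [measurable]: "h \<in> borel_measurable M" "u \<in> borel_measurable M"
    using h u by (auto intro: measurable_from_subalg[OF subalg])
  note int_h = integrable_huber_loss[OF hu_M(1) h_le]
  then have finite: "risk u < \<infinity>" using risk_le by (simp add: risk_eq_integral le_less_trans)
  note int_u = integrable_of_risk_finite(1)[OF hu_M(2) finite]
  note gap = integral_huber_loss_eq_add_gap[OF h h_le root u finite]
  have "0 \<le> (\<integral> w. huber_loss \<tau> (W w - h w) \<partial>M)"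
    by (intro integral_nonneg_AE AE_I2 huber_loss_nonneg) (simp add: less_imp_le tau_pos)
  with risk_le have "(\<integral> w. huber_loss \<tau> (W w - u w) \<partial>M) \<le> (\<integral> w. huber_loss \<tau> (W w - h w) \<partial>M)"
    unfolding risk_eq_integral[OF int_h] risk_eq_integral[OF int_u] by (simp add: ennreal_le_iff)
  moreover have "0 \<le> (\<integral> w. huber_gap h u w \<partial>M)"
    by (intro integral_nonneg_AE AE_I2) (rule huber_gap_nonneg)
  ultimately have "(\<integral> w. huber_gap h u w \<partial>M) = 0" using gap(2) by linarith
  then have gap_0: "AE w in M. huber_gap h u w = 0"
    using integral_nonneg_eq_0_iff_AE[OF gap(1)] by (simp add: huber_gap_nonneg)
  define B where "B = {w \<in> space M. u w \<noteq> h w}"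
  have "space F = space M" using subalg by (simp add: subalgebra_def)
  moreover have "{w \<in> space F. u w \<noteq> h w} \<in> sets F" by measurable
  ultimately have "B \<in> sets F" by (simp add: B_def)
  moreover have "AE w in M. w \<in> B \<longrightarrow> \<tau> - L \<le> \<bar>W w\<bar>"
    using gap_0
  proof eventually_elim
    case (elim w)
    show ?case
    proof
      assume "w \<in> B"
      then have "\<tau> \<le> \<bar>W w - h w\<bar>" using huber_gap_pos[of w h u] elim by (force simp: B_def)
      then show "\<tau> - L \<le> \<bar>W w\<bar>" using h_le[of w] by linarith
    qed
  qed
  ultimately have "B \<in> null_sets M" using tail by (simp add: cond_tail_lt_one_def)
  then show ?thesis by (rule AE_I') (auto simp: B_def)
qed

end

section \<open>A root of the conditional score\<close>

locale huber_bracket = huber_problem +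
  fixes L :: real
  assumes L_nonneg: "0 \<le> L"
    and cond_score_const_L: "AE w in M. cond_score (\<lambda>_. L) w \<le> 0"
    and cond_score_const_neg_L: "AE w in M. 0 \<le> cond_score (\<lambda>_. - L) w"
begin

definition huber_step :: "('a \<Rightarrow> real) \<Rightarrow> 'a \<Rightarrow> real" where
  "huber_step h w = h w + cond_score h w"

lemma borel_measurable_huber_step: "h \<in> borel_measurable F \<Longrightarrow> huber_step h \<in> borel_measurable F"
  unfolding huber_step_def[abs_def] cond_score_def by (intro borel_measurable_add borel_measurable_cond_exp)

lemma real_cond_exp_eq_huber_step:
  assumes h: "h \<in> borel_measurable F" and h_le: "\<And>w. \<bar>h w\<bar> \<le> B"
  shows "AE w in M. real_cond_exp M F (\<lambda>w. h w + huber_psi \<tau> (W w - h w)) w = huber_step h w"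
proof -
  have h_M [measurable]: "h \<in> borel_measurable M" using h by (rule measurable_from_subalg[OF subalg])
  have "integrable M h" by (rule integrable_const_bound[where B=B]) (use h_le in auto)
  from real_cond_exp_add[OF this integrable_huber_psi[OF h_M]] real_cond_exp_F_meas[OF this h]
  show ?thesis unfolding huber_step_def cond_score_def by eventually_elim simp
qed

lemma huber_step_mono:
  assumes "a \<in> borel_measurable F" "\<And>w. \<bar>a w\<bar> \<le> B" "b \<in> borel_measurable F" "\<And>w. \<bar>b w\<bar> \<le> B"
    and "AE w in M. a w \<le> b w"
  shows "AE w in M. huber_step a w \<le> huber_step b w"
proof -
  have [measurable]: "a \<in> borel_measurable M" "b \<in> borel_measurable M"
    using assms by (auto intro: measurable_from_subalg[OF subalg])
  have "integrable M a" "integrable M b"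
    by (rule integrable_const_bound[where B=B]; use assms in simp)+
  then have "AE w in M. real_cond_exp M F (\<lambda>w. a w + huber_psi \<tau> (W w - a w)) w
      \<le> real_cond_exp M F (\<lambda>w. b w + huber_psi \<tau> (W w - b w)) w"
    by (intro real_cond_exp_mono) (use assms(5) add_huber_psi_diff_mono integrable_huber_psi in auto)
  with real_cond_exp_eq_huber_step[OF assms(1,2)] real_cond_exp_eq_huber_step[OF assms(3,4)]
  show ?thesis by eventually_elim simp
qed

lemma huber_step_bounded:
  assumes h: "h \<in> borel_measurable F" and h_le: "\<And>w. \<bar>h w\<bar> \<le> L"
  shows "AE w in M. \<bar>huber_step h w\<bar> \<le> L"
proof -
  have const: "(\<lambda>_. c) \<in> borel_measurable F" for c :: real by simp
  have h_bounds: "- L \<le> h w" "h w \<le> L" for w using h_le[of w] by auto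
  have "AE w in M. huber_step h w \<le> huber_step (\<lambda>_. L) w"
    by (rule huber_step_mono[OF h h_le const]) (use L_nonneg h_bounds in auto)
  moreover have "AE w in M. huber_step (\<lambda>_. - L) w \<le> huber_step h w"
    by (rule huber_step_mono[OF const _ h h_le]) (use L_nonneg h_bounds in auto)
  ultimately show ?thesis using cond_score_const_L cond_score_const_neg_L
    by eventually_elim (auto simp: huber_step_def abs_le_iff)
qed

text \<open>Kleene iteration of the monotone map \<open>huber_step\<close> from the bracket end \<open>-L\<close>. The outer
  clipping only acts on null sets; it keeps every iterate bounded everywhere.\<close>

primrec root_approx :: "nat \<Rightarrow> 'a \<Rightarrow> real" where
  "root_approx 0 = (\<lambda>_. - L)"
| "root_approx (Suc k) = (\<lambda>w. huber_psi L (huber_step (root_approx k) w))"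

lemma borel_measurable_root_approx: "root_approx k \<in> borel_measurable F"
  by (induction k) (auto intro!: borel_measurable_huber_psi borel_measurable_huber_step)

lemma abs_root_approx_le: "\<bar>root_approx k w\<bar> \<le> L"
  by (cases k) (simp_all add: L_nonneg huber_psi_abs_le)

lemma root_approx_Suc_ae: "AE w in M. root_approx (Suc k) w = huber_step (root_approx k) w"
  using huber_step_bounded[OF borel_measurable_root_approx[of k] abs_root_approx_le[of k]]
  by eventually_elim (simp add: huber_psi_eq_self)

lemma root_approx_incseq_ae: "AE w in M. root_approx k w \<le> root_approx (Suc k) w"
proof (induction k)
  case 0
  have approx_1: "- L \<le> root_approx (Suc 0) w" for w
    using abs_root_approx_le[of "Suc 0" w] unfolding abs_le_iff by linarith
  show ?case by (intro AE_I2) (use approx_1 in \<open>simp only: root_approx.simps(1)\<close>)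
next
  case (Suc k)
  have "AE w in M. huber_step (root_approx k) w \<le> huber_step (root_approx (Suc k)) w"
    by (rule huber_step_mono[OF borel_measurable_root_approx abs_root_approx_le
          borel_measurable_root_approx abs_root_approx_le Suc])
  then show ?case by eventually_elim (simp add: huber_psi_mono)
qed

definition root_limit :: "'a \<Rightarrow> real" where
  "root_limit w = (SUP k. root_approx k w)"

lemma bdd_above_root_approx: "bdd_above (range (\<lambda>k. root_approx k w))"
  using abs_root_approx_le by (intro bdd_aboveI[where M=L]) (auto simp: abs_le_iff)

lemma borel_measurable_root_limit: "root_limit \<in> borel_measurable F"
  unfolding root_limit_def
  by (rule borel_measurable_cSUP) (auto intro: borel_measurable_root_approx bdd_above_root_approx)

lemma abs_root_limit_le: "\<bar>root_limit w\<bar> \<le> L"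
proof -
  have "root_limit w \<le> L"
    unfolding root_limit_def using abs_root_approx_le by (intro cSUP_least) (auto simp: abs_le_iff)
  moreover have "root_approx 0 w \<le> root_limit w"
    unfolding root_limit_def by (rule cSUP_upper[OF _ bdd_above_root_approx]) simp
  ultimately show ?thesis using L_nonneg by auto
qed

lemma root_approx_LIMSEQ_ae: "AE w in M. (\<lambda>k. root_approx k w) \<longlonglongrightarrow> root_limit w"
proof -
  have "AE w in M. \<forall>k. root_approx k w \<le> root_approx (Suc k) w"
    unfolding AE_all_countable by (intro allI root_approx_incseq_ae)
  then show ?thesis
    unfolding root_limit_def
  proof eventually_elim
    case (elim w)
    then have "incseq (\<lambda>k. root_approx k w)" by (intro incseq_SucI) blast
    then show ?case by (rule LIMSEQ_incseq_SUP[OF bdd_above_root_approx])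
  qed
qed

text \<open>The increments \<open>cond_score (root_approx k)\<close> tend to zero, and \<open>cond_score\<close> is
  1-Lipschitz.\<close>

lemma cond_score_root_limit: "AE w in M. cond_score root_limit w = 0"
proof -
  have "AE w in M. \<forall>k. \<bar>cond_score root_limit w - cond_score (root_approx k) w\<bar>
      \<le> \<bar>root_limit w - root_approx k w\<bar>"
    unfolding AE_all_countable
    by (intro allI cond_score_lipschitz[where B=L] borel_measurable_root_limit abs_root_limit_le
        borel_measurable_root_approx abs_root_approx_le)
  moreover have "AE w in M. \<forall>k. root_approx (Suc k) w = huber_step (root_approx k) w"
    unfolding AE_all_countable by (intro allI root_approx_Suc_ae)
  ultimately show ?thesis using root_approx_LIMSEQ_ae
  proof eventually_elim
    case (elim w)
    let ?h = root_limit and ?x = "\<lambda>k. root_approx k w"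
    have "(\<lambda>k. \<bar>?h w - ?x k\<bar> + \<bar>?x (Suc k) - ?x k\<bar>) \<longlonglongrightarrow> \<bar>?h w - ?h w\<bar> + \<bar>?h w - ?h w\<bar>"
      by (intro tendsto_intros elim(3) LIMSEQ_Suc[OF elim(3)])
    moreover have "\<bar>cond_score ?h w\<bar> \<le> \<bar>?h w - ?x k\<bar> + \<bar>?x (Suc k) - ?x k\<bar>" for k
    proof -
      have "cond_score (root_approx k) w = ?x (Suc k) - ?x k" using elim(2) by (simp add: huber_step_def)
      then have "\<bar>cond_score ?h w\<bar> \<le> \<bar>cond_score ?h w - cond_score (root_approx k) w\<bar> + \<bar>?x (Suc k) - ?x k\<bar>"
        using abs_triangle_ineq[of "cond_score ?h w - cond_score (root_approx k) w"] by simp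
      moreover have "\<bar>cond_score ?h w - cond_score (root_approx k) w\<bar> \<le> \<bar>?h w - ?x k\<bar>"
        using elim(1) by blast
      ultimately show ?thesis by linarith
    qed
    ultimately have "\<bar>cond_score ?h w\<bar> \<le> 0"
      by (intro LIMSEQ_le_const) auto
    then show ?case by simp
  qed
qed

theorem cond_huber_minimiser:
  assumes "cond_tail_lt_one (\<tau> - L)"
  obtains h where "h \<in> borel_measurable F" "\<And>w. \<bar>h w\<bar> \<le> L"
    "\<And>u. u \<in> borel_measurable F \<Longrightarrow> risk h \<le> risk u"
    "\<And>u. u \<in> borel_measurable F \<Longrightarrow> risk u \<le> risk h \<Longrightarrow> AE w in M. u w = h w"
proof (rule that[of root_limit])
  fix u :: "'a \<Rightarrow> real" assume "u \<in> borel_measurable F"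
  then show "risk root_limit \<le> risk u"
    by (rule risk_le_of_cond_score_eq_0[OF borel_measurable_root_limit abs_root_limit_le
          cond_score_root_limit])
  assume "risk u \<le> risk root_limit"
  then show "AE w in M. u w = root_limit w"
    by (rule ae_eq_of_risk_le[OF borel_measurable_root_limit abs_root_limit_le
          cond_score_root_limit \<open>u \<in> borel_measurable F\<close> _ assms])
qed (simp_all add: borel_measurable_root_limit abs_root_limit_le)

end

section \<open>Brackets from moment bounds\<close>

lemma heavy_tail_shift_bounds:
  fixes p \<nu> \<tau> :: real
  assumes p: "1 < p" "p < 2" and nu: "0 < \<nu>" and tau_pos: "0 < \<tau>" and tau: "4 * \<nu> \<le> \<tau> powr p"
  defines "L \<equiv> 2 * \<nu> * \<tau> powr (1 - p)"
  shows "\<tau> / 2 \<le> \<tau> - L" and "(\<tau> - L) powr (1 - p) * \<nu> \<le> L" and "\<nu> < (\<tau> - L) powr p"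
proof -
  have "L = 2 * \<tau> * \<nu> / \<tau> powr p" unfolding L_def using tau_pos by (simp add: powr_diff)
  also have "\<dots> \<le> \<tau> / 2" using tau tau_pos by (simp add: field_simps)
  finally show half: "\<tau> / 2 \<le> \<tau> - L" by simp
  have "(\<tau> - L) powr (1 - p) \<le> (\<tau> / 2) powr (1 - p)"
    using p half tau_pos by (intro powr_mono2') auto
  also have "\<dots> = \<tau> powr (1 - p) * 2 powr (p - 1)"
    by (simp add: powr_divide powr_minus_divide powr_diff divide_simps)
  also have "\<dots> \<le> \<tau> powr (1 - p) * 2"
    using p powr_mono[of "p - 1" 1 2] by (intro mult_left_mono) auto
  finally show "(\<tau> - L) powr (1 - p) * \<nu> \<le> L"
    using nu unfolding L_def by (simp add: mult_right_mono mult.commute mult.left_commute)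
  have "2 powr p < 2 powr 2" using p by (intro powr_less_mono) auto
  then have "\<nu> * 2 powr p < \<nu> * 4" using nu by simp
  then have "\<nu> * 2 powr p < \<tau> powr p" using tau by linarith
  then have "\<nu> < (\<tau> / 2) powr p" by (simp add: powr_divide field_simps)
  also have "\<dots> \<le> (\<tau> - L) powr p" using half tau_pos p by (intro powr_mono2) auto
  finally show "\<nu> < (\<tau> - L) powr p" .
qed

context huber_problem
begin

lemma huber_bracket_of_remainder:
  fixes r :: "real \<Rightarrow> real"
  assumes centered: "AE w in M. real_cond_exp M F W w = 0" and "0 \<le> L"
    and "integrable M (\<lambda>w. r (W w))" "AE w in M. real_cond_exp M F (\<lambda>w. r (W w)) w \<le> L"
    and "\<And>x. huber_psi \<tau> (x - L) \<le> x - L + r x" "\<And>x. r (- x) = r x"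
  shows "huber_bracket M F W \<tau> L"
proof (intro huber_bracket.intro huber_problem_axioms huber_bracket_axioms.intro \<open>0 \<le> L\<close>)
  note bracket = cond_huber_psi_bracket[OF integrable_W centered assms(3,4) _ assms(5,6)]
  show "AE w in M. cond_score (\<lambda>_. L) w \<le> 0"
    using bracket(1) tau_pos by (simp add: cond_score_def)
  show "AE w in M. 0 \<le> cond_score (\<lambda>_. - L) w"
    using bracket(2) tau_pos by (simp add: cond_score_def)
qed

lemma cond_tail_lt_oneI:
  assumes "integrable M (\<lambda>w. \<Phi> (W w))" "AE w in M. real_cond_exp M F (\<lambda>w. \<Phi> (W w)) w \<le> \<nu>"
    and "\<nu> < K" and "\<And>x. r \<le> \<bar>x\<bar> \<Longrightarrow> K \<le> \<Phi> x"
  shows "cond_tail_lt_one r"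
  unfolding cond_tail_lt_one_def
proof (intro ballI impI)
  fix B assume B: "B \<in> sets F" and "AE w in M. w \<in> B \<longrightarrow> r \<le> \<bar>W w\<bar>"
  then have "AE w in M. w \<in> B \<longrightarrow> K \<le> \<Phi> (W w)" by eventually_elim (auto intro: assms(4))
  then show "B \<in> null_sets M" by (rule null_sets_of_real_cond_exp_le[OF assms(1-3) B])
qed

lemma huber_bracket_heavy_tail:
  assumes centered: "AE w in M. real_cond_exp M F W w = 0"
    and p: "1 < p" "p < 2"
    and moment_int: "integrable M (\<lambda>w. \<bar>W w\<bar> powr p)"
    and moment: "AE w in M. real_cond_exp M F (\<lambda>w. \<bar>W w\<bar> powr p) w \<le> \<nu>"
    and nu: "0 < \<nu>" and tau: "(4 * \<nu>) powr (1 / p) \<le> \<tau>"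
  obtains L where "huber_bracket M F W \<tau> L" "cond_tail_lt_one (\<tau> - L)" "L \<le> 2 * \<nu> * \<tau> powr (1 - p)"
proof -
  have "4 * \<nu> = ((4 * \<nu>) powr (1 / p)) powr p" using p nu by (simp add: powr_powr)
  also have "\<dots> \<le> \<tau> powr p" using tau p by (intro powr_mono2) auto
  finally have "4 * \<nu> \<le> \<tau> powr p" .
  define L where "L = 2 * \<nu> * \<tau> powr (1 - p)"
  note bounds = heavy_tail_shift_bounds[OF p nu tau_pos \<open>4 * \<nu> \<le> \<tau> powr p\<close>, folded L_def]
  define c where "c = (\<tau> - L) powr (1 - p)"
  have L_nonneg: "0 \<le> L" using nu unfolding L_def by simp
  have "huber_psi \<tau> (x - L) \<le> x - L + c * \<bar>x\<bar> powr p" for x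
  proof -
    have "huber_psi \<tau> (x - L) \<le> x - L + max 0 (- x - (\<tau> - L))"
      using huber_psi_le_add_neg_part[of \<tau> "x - L"] by simp
    moreover have "max 0 (- x - (\<tau> - L)) \<le> c * \<bar>x\<bar> powr p"
      unfolding c_def using bounds(1) tau_pos p neg_part_le_powr[of "\<tau> - L" p x] by (simp add: mult.commute)
    ultimately show ?thesis by linarith
  qed
  moreover have "AE w in M. real_cond_exp M F (\<lambda>w. c * \<bar>W w\<bar> powr p) w \<le> L"
    using real_cond_exp_cmult[OF moment_int, of c] moment
  proof eventually_elim
    case (elim w)
    have "c * real_cond_exp M F (\<lambda>w. \<bar>W w\<bar> powr p) w \<le> c * \<nu>"
      using elim(2) by (intro mult_left_mono) (simp_all add: c_def)
    then show ?case using elim(1) bounds(2) by (simp add: c_def)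
  qed
  ultimately have bracket: "huber_bracket M F W \<tau> L"
    using moment_int
    by (intro huber_bracket_of_remainder[OF centered L_nonneg, where r="\<lambda>x. c * \<bar>x\<bar> powr p"]) auto
  have "(\<tau> - L) powr p \<le> \<bar>x\<bar> powr p" if "\<tau> - L \<le> \<bar>x\<bar>" for x
    using that bounds(1) tau_pos p by (intro powr_mono2) auto
  then have "cond_tail_lt_one (\<tau> - L)"
    using bounds(3) by (intro cond_tail_lt_oneI[OF moment_int moment]) auto
  with bracket show thesis by (rule that) (simp add: L_def)
qed

lemma huber_bracket_two_moments:
  assumes centered: "AE w in M. real_cond_exp M F W w = 0"
    and p: "2 \<le> p"
    and moment_int: "integrable M (\<lambda>w. \<bar>W w\<bar> powr p)"
    and moment: "AE w in M. real_cond_exp M F (\<lambda>w. \<bar>W w\<bar> powr p) w \<le> \<nu>\<^sub>p"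
    and var_int: "integrable M (\<lambda>w. (W w)\<^sup>2)"
    and var: "AE w in M. real_cond_exp M F (\<lambda>w. (W w)\<^sup>2) w \<le> \<nu>\<^sub>2"
    and L_eq: "L = 2 * \<nu>\<^sub>p * \<tau> powr (1 - p)" and L: "0 \<le> L" "L < \<tau>"
    and var_gap: "9 * \<nu>\<^sub>2 \<le> 4 * (\<tau> - L)\<^sup>2"
  shows "huber_bracket M F W \<tau> L"
proof -
  define a where "a = \<tau> powr (1 - p)"
  define b where "b = L / (\<tau> - L)\<^sup>2"
  have "huber_psi \<tau> (x - L) \<le> x - L + (a * \<bar>x\<bar> powr p + b * x\<^sup>2)" for x
  proof -
    have "max 0 (- x - \<tau>) \<le> \<bar>x\<bar> powr p * \<tau> powr (1 - p)"
      using tau_pos p by (intro neg_part_le_powr) auto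
    then have "huber_psi \<tau> x \<le> x + a * \<bar>x\<bar> powr p"
      using huber_psi_le_add_neg_part[of \<tau> x] unfolding a_def by (simp only: mult.commute)
    then show ?thesis using huber_psi_diff_le[of L \<tau> x] L by (simp add: b_def)
  qed
  moreover have "AE w in M. real_cond_exp M F (\<lambda>w. a * \<bar>W w\<bar> powr p + b * (W w)\<^sup>2) w \<le> L"
  proof -
    have "\<nu>\<^sub>2 / (\<tau> - L)\<^sup>2 \<le> 4 / 9" using var_gap L by (simp add: field_simps)
    then have "L * (\<nu>\<^sub>2 / (\<tau> - L)\<^sup>2) \<le> L * (4 / 9)" using L(1) by (rule mult_left_mono)
    moreover have "a * \<nu>\<^sub>p = L / 2" by (simp add: a_def L_eq)
    ultimately have sum_le: "a * \<nu>\<^sub>p + b * \<nu>\<^sub>2 \<le> L" using L(1) by (simp add: b_def)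
    have "AE w in M. real_cond_exp M F (\<lambda>w. a * \<bar>W w\<bar> powr p + b * (W w)\<^sup>2) w \<le> a * \<nu>\<^sub>p + b * \<nu>\<^sub>2"
      by (rule real_cond_exp_lincomb_le[OF moment_int var_int moment var]) (simp_all add: a_def b_def L(1))
    then show ?thesis
    proof eventually_elim
      case (elim w)
      then show ?case using sum_le by linarith
    qed
  qed
  ultimately show ?thesis
    using moment_int var_int
    by (intro huber_bracket_of_remainder[OF centered L(1), where r="\<lambda>x. a * \<bar>x\<bar> powr p + b * x\<^sup>2"])
      auto
qed

lemma huber_bracket_variance:
  assumes centered: "AE w in M. real_cond_exp M F W w = 0"
    and var_int: "integrable M (\<lambda>w. (W w)\<^sup>2)"
    and var: "AE w in M. real_cond_exp M F (\<lambda>w. (W w)\<^sup>2) w \<le> \<nu>\<^sub>2"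
    and tau: "4 * \<nu>\<^sub>2 \<le> \<tau>\<^sup>2"
  shows "huber_bracket M F W \<tau> (\<tau> / 4)"
proof -
  define c where "c = 1 / (3 * \<tau>)"
  have "huber_psi \<tau> (x - \<tau> / 4) \<le> x - \<tau> / 4 + c * x\<^sup>2" for x
  proof -
    have "huber_psi \<tau> (x - \<tau> / 4) \<le> x - \<tau> / 4 + max 0 (- x - 3 * \<tau> / 4)"
      using huber_psi_le_add_neg_part[of \<tau> "x - \<tau> / 4"] by simp
    moreover have "max 0 (- x - 3 * \<tau> / 4) \<le> c * x\<^sup>2"
      unfolding c_def using neg_part_le_square[of "3 * \<tau> / 4" x] tau_pos by simp
    ultimately show ?thesis by linarith
  qed
  moreover have "AE w in M. real_cond_exp M F (\<lambda>w. c * (W w)\<^sup>2) w \<le> \<tau> / 4"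
    using real_cond_exp_cmult[OF var_int, of c] var
  proof eventually_elim
    case (elim w)
    have "c * real_cond_exp M F (\<lambda>w. (W w)\<^sup>2) w \<le> c * \<nu>\<^sub>2"
      using elim(2) tau_pos by (intro mult_left_mono) (auto simp: c_def)
    also have "\<dots> \<le> \<tau> / 4"
    proof -
      have "4 * \<nu>\<^sub>2 \<le> 3 * \<tau>\<^sup>2" using tau zero_le_power2[of \<tau>] by linarith
      then show ?thesis using tau_pos by (simp add: c_def field_simps power2_eq_square)
    qed
    finally show ?case using elim(1) by simp
  qed
  ultimately show ?thesis
    using var_int tau_pos
    by (intro huber_bracket_of_remainder[OF centered, where r="\<lambda>x. c * x\<^sup>2"]) auto
qed

lemma huber_bracket_finite_variance:
  assumes centered: "AE w in M. real_cond_exp M F W w = 0"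
    and p: "2 \<le> p"
    and moment_int: "integrable M (\<lambda>w. \<bar>W w\<bar> powr p)"
    and moment: "AE w in M. real_cond_exp M F (\<lambda>w. \<bar>W w\<bar> powr p) w \<le> \<nu>\<^sub>p"
    and var_int: "integrable M (\<lambda>w. (W w)\<^sup>2)"
    and var: "AE w in M. real_cond_exp M F (\<lambda>w. (W w)\<^sup>2) w \<le> \<nu>\<^sub>2"
    and nu_p: "0 < \<nu>\<^sub>p" and tau: "sqrt (4 * \<nu>\<^sub>2) \<le> \<tau>"
  obtains L where "huber_bracket M F W \<tau> L" "cond_tail_lt_one (\<tau> - L)" "L \<le> 2 * \<nu>\<^sub>p * \<tau> powr (1 - p)"
proof -
  define \<delta> where "\<delta> = 2 * \<nu>\<^sub>p * \<tau> powr (1 - p)"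
  define L where "L = min \<delta> (\<tau> / 4)"
  have L: "0 \<le> L" "L \<le> \<tau> / 4" "L \<le> \<delta>" using nu_p tau_pos unfolding L_def \<delta>_def by auto
  have "(3 * \<tau> / 4)\<^sup>2 \<le> (\<tau> - L)\<^sup>2" using L tau_pos by (intro power_mono) auto
  moreover have tau': "4 * \<nu>\<^sub>2 \<le> \<tau>\<^sup>2" using sqrt_le_D[OF tau] .
  ultimately have var_gap: "9 * \<nu>\<^sub>2 \<le> 4 * (\<tau> - L)\<^sup>2" by (simp add: power2_eq_square field_simps)
  have "huber_bracket M F W \<tau> L"
  proof (cases "\<delta> \<le> \<tau> / 4")
    case True
    then show ?thesis
      using L tau_pos var_gap unfolding L_def \<delta>_def
      by (intro huber_bracket_two_moments[OF centered p moment_int moment var_int var]) auto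
  next
    case False
    then show ?thesis using huber_bracket_variance[OF centered var_int var tau'] by (simp add: L_def)
  qed
  moreover have "cond_tail_lt_one (\<tau> - L)"
  proof (rule cond_tail_lt_oneI[OF var_int var])
    have "0 < (\<tau> - L)\<^sup>2" using L tau_pos by simp
    then show "\<nu>\<^sub>2 < (\<tau> - L)\<^sup>2" using var_gap by linarith
    show "(\<tau> - L)\<^sup>2 \<le> x\<^sup>2" if "\<tau> - L \<le> \<bar>x\<bar>" for x
    proof -
      have "(\<tau> - L)\<^sup>2 \<le> \<bar>x\<bar>\<^sup>2" using that L tau_pos by (intro power_mono) auto
      then show ?thesis by simp
    qed
  qed
  ultimately show thesis using that L(3) unfolding \<delta>_def by blast
qed

lemma huber_bracket_of_moments:
  assumes centered: "AE w in M. real_cond_exp M F W w = 0"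
    and p: "1 < p" and nu_p: "0 < \<nu>\<^sub>p"
    and moment_p: "AE w in M. nn_cond_exp M F (\<lambda>w. ennreal (\<bar>W w\<bar> powr p)) w \<le> ennreal \<nu>\<^sub>p"
    and moment_2: "2 \<le> p \<Longrightarrow> 0 < \<nu>\<^sub>2 \<and>
      (AE w in M. nn_cond_exp M F (\<lambda>w. ennreal ((W w)\<^sup>2)) w \<le> ennreal \<nu>\<^sub>2)"
    and tau_small_p: "p < 2 \<Longrightarrow> (4 * \<nu>\<^sub>p) powr (1 / p) \<le> \<tau>"
    and tau_large_p: "2 \<le> p \<Longrightarrow> sqrt (4 * \<nu>\<^sub>2) \<le> \<tau>"
  obtains L where "huber_bracket M F W \<tau> L" "cond_tail_lt_one (\<tau> - L)" "L \<le> 2 * \<nu>\<^sub>p * \<tau> powr (1 - p)"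
proof (cases "p < 2")
  case True
  from huber_bracket_heavy_tail[OF centered p True integrable_of_nn_cond_exp_le[OF _ _ moment_p]
      real_cond_exp_le_of_nn_cond_exp_le[OF _ moment_p] nu_p tau_small_p[OF True]] nu_p that
  show thesis by auto
next
  case False
  then have "0 < \<nu>\<^sub>2" and var: "AE w in M. nn_cond_exp M F (\<lambda>w. ennreal ((W w)\<^sup>2)) w \<le> ennreal \<nu>\<^sub>2"
    using moment_2 by auto
  from huber_bracket_finite_variance[OF centered _ integrable_of_nn_cond_exp_le[OF _ _ moment_p]
      real_cond_exp_le_of_nn_cond_exp_le[OF _ moment_p] integrable_of_nn_cond_exp_le[OF _ _ var]
      real_cond_exp_le_of_nn_cond_exp_le[OF _ var] nu_p tau_large_p] False \<open>0 < \<nu>\<^sub>2\<close> nu_p that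
  show thesis by auto
qed

end

section \<open>Back to the regression function\<close>


lemma borel_measurable_vimage_algebra_factor:
  fixes X :: "'a \<Rightarrow> 'b::topological_space" and h :: "'a \<Rightarrow> real"
  assumes "h \<in> borel_measurable (vimage_algebra S X borel)"
  obtains c where "c \<in> borel_measurable borel" "\<And>w. w \<in> S \<Longrightarrow> h w = c (X w)"
proof -
  have "\<exists>A \<in> sets borel. X -` A \<inter> S = {w \<in> S. h w < of_rat r}" for r
  proof -
    have "{w \<in> space (vimage_algebra S X borel). h w < of_rat r} \<in> sets (vimage_algebra S X borel)"
      using assms by measurable
    then have "{w \<in> S. h w < of_rat r} \<in> {X -` A \<inter> S | A. A \<in> sets borel}"
      using sets_vimage_algebra2[of X S "borel :: 'b measure"] by simp
    then show ?thesis by blast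
  qed
  then obtain A where A [measurable]: "\<And>r. A r \<in> sets borel"
    and A_eq: "\<And>r. X -` A r \<inter> S = {w \<in> S. h w < of_rat r}"
    by metis
  \<comment> \<open>\<open>c x\<close> is the infimum of the rationals \<open>r\<close> with \<open>x \<in> A r\<close>, i.e. of those exceeding \<open>h\<close>.\<close>
  define c' where "c' x = (INF r. if x \<in> A r then ereal (of_rat r) else \<infinity>)" for x
  have "c' \<in> borel_measurable borel" unfolding c'_def by measurable
  then have "(\<lambda>x. real_of_ereal (c' x)) \<in> borel_measurable borel" by measurable
  moreover have "h w = real_of_ereal (c' (X w))" if w: "w \<in> S" for w
  proof -
    have iff: "X w \<in> A r \<longleftrightarrow> h w < of_rat r" for r
      using A_eq[of r] w by blast
    have "c' (X w) = ereal (h w)"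
    proof (rule antisym)
      show "ereal (h w) \<le> c' (X w)" unfolding c'_def
        by (rule INF_greatest) (auto simp: iff)
      show "c' (X w) \<le> ereal (h w)"
      proof (rule dense_ge)
        fix y assume "ereal (h w) < y"
        then obtain z where z: "ereal (h w) < ereal z" "ereal z < y" using ereal_dense2 by blast
        then obtain r where r: "h w < of_rat r" "of_rat r < z" using of_rat_dense[of "h w" z] by auto
        have "c' (X w) \<le> ereal (of_rat r)"
          unfolding c'_def using r(1) iff by (intro INF_lower2[of r]) auto
        also have "\<dots> \<le> y" using r(2) z(2) by (meson ereal_less_eq(3) less_imp_le order_trans)
        finally show "c' (X w) \<le> y" .
      qed
    qed
    then show ?thesis by simp
  qed
  ultimately show thesis by (rule that)
qed

lemma measurable_vimage_algebra_compose:
  "X \<in> S \<rightarrow> space N \<Longrightarrow> g \<in> N \<rightarrow>\<^sub>M K \<Longrightarrow> (\<lambda>w. g (X w)) \<in> vimage_algebra S X N \<rightarrow>\<^sub>M K"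
  using measurable_compose[OF measurable_vimage_algebra1] by blast

lemma (in finite_measure) finite_measure_subalgebra_vimage_algebra:
  assumes "X \<in> M \<rightarrow>\<^sub>M N"
  shows "finite_measure_subalgebra M (vimage_algebra (space M) X N)"
proof (intro finite_measure_subalgebra.intro finite_measure_axioms finite_measure_subalgebra_axioms.intro)
  show "subalgebra M (vimage_algebra (space M) X N)"
    unfolding subalgebra_def using assms measurable_iff_sets[of X M N] by auto
qed

context huber_problem
begin

context
  fixes X :: "'a \<Rightarrow> 'b::topological_space" and Z :: "'a \<Rightarrow> real" and g\<^sub>0 :: "'b \<Rightarrow> real" and \<alpha> :: real
  assumes F_eq: "F = vimage_algebra (space M) X borel"
    and X [measurable]: "X \<in> borel_measurable M" and alpha: "0 < \<alpha>"
    and g0 [measurable]: "g\<^sub>0 \<in> borel_measurable borel"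
    and Z_eq: "AE w in M. Z w = \<alpha> * g\<^sub>0 (X w) + W w"
begin

lemma borel_measurable_F_compose: "g \<in> borel_measurable borel \<Longrightarrow> (\<lambda>w. g (X w)) \<in> borel_measurable F"
  unfolding F_eq by (rule measurable_vimage_algebra_compose) auto

lemma huber_risk_eq_risk: "huber_risk M X Z \<alpha> \<tau> g = risk (\<lambda>w. \<alpha> * (g (X w) - g\<^sub>0 (X w)))"
  unfolding huber_risk_def risk_def
  by (rule nn_integral_cong_AE) (use Z_eq in \<open>eventually_elim, simp add: algebra_simps\<close>)

lemma borel_measurable_F_deviation:
  assumes "g \<in> borel_measurable borel"
  shows "(\<lambda>w. \<alpha> * (g (X w) - g\<^sub>0 (X w))) \<in> borel_measurable F"
  by (intro borel_measurable_times borel_measurable_diff borel_measurable_const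
      borel_measurable_F_compose assms g0)

context
  fixes h :: "'a \<Rightarrow> real"
  assumes h: "h \<in> borel_measurable F"
    and h_min: "\<And>u. u \<in> borel_measurable F \<Longrightarrow> risk h \<le> risk u"
    and h_unique: "\<And>u. u \<in> borel_measurable F \<Longrightarrow> risk u \<le> risk h \<Longrightarrow> AE w in M. u w = h w"
begin

lemma huber_risk_eq_cond_minimiser:
  obtains g where "g \<in> borel_measurable borel" "huber_risk M X Z \<alpha> \<tau> g = risk h"
proof -
  obtain c where c [measurable]: "c \<in> borel_measurable borel"
    and h_eq: "\<And>w. w \<in> space M \<Longrightarrow> h w = c (X w)"
    using borel_measurable_vimage_algebra_factor[of h "space M" X] h unfolding F_eq by metis
  define g where "g x = g\<^sub>0 x + c x / \<alpha>" for x
  have "g \<in> borel_measurable borel" unfolding g_def by measurable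
  moreover have "huber_risk M X Z \<alpha> \<tau> g = risk h"
    unfolding huber_risk_eq_risk risk_def by (rule nn_integral_cong) (use alpha h_eq in \<open>simp add: g_def\<close>)
  ultimately show thesis by (rule that)
qed

lemma huber_argmin_exists: "\<exists>g. huber_argmin M X Z \<alpha> \<tau> g"
proof -
  obtain g where g: "g \<in> borel_measurable borel" "huber_risk M X Z \<alpha> \<tau> g = risk h"
    by (rule huber_risk_eq_cond_minimiser)
  have "huber_argmin M X Z \<alpha> \<tau> g"
    unfolding huber_argmin_def
  proof (intro conjI ballI g(1))
    fix g' :: "'b \<Rightarrow> real" assume "g' \<in> borel_measurable borel"
    then show "huber_risk M X Z \<alpha> \<tau> g \<le> huber_risk M X Z \<alpha> \<tau> g'"
      unfolding g(2) huber_risk_eq_risk[of g'] by (intro h_min borel_measurable_F_deviation)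
  qed
  then show ?thesis by blast
qed

lemma ae_eq_of_huber_argmin:
  assumes g: "huber_argmin M X Z \<alpha> \<tau> g"
  shows "AE w in M. \<alpha> * (g (X w) - g\<^sub>0 (X w)) = h w"
proof (rule h_unique)
  show "(\<lambda>w. \<alpha> * (g (X w) - g\<^sub>0 (X w))) \<in> borel_measurable F"
    using g by (simp add: huber_argmin_def borel_measurable_F_deviation)
  obtain g' where "g' \<in> borel_measurable borel" "huber_risk M X Z \<alpha> \<tau> g' = risk h"
    by (rule huber_risk_eq_cond_minimiser)
  moreover from g \<open>g' \<in> borel_measurable borel\<close>
  have "huber_risk M X Z \<alpha> \<tau> g \<le> huber_risk M X Z \<alpha> \<tau> g'"
    unfolding huber_argmin_def by blast
  ultimately have "huber_risk M X Z \<alpha> \<tau> g \<le> risk h" by simp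
  then show "risk (\<lambda>w. \<alpha> * (g (X w) - g\<^sub>0 (X w))) \<le> risk h"
    by (simp add: huber_risk_eq_risk)
qed

lemma huber_argmin_of_cond_minimiser:
  assumes h_le: "\<And>w. \<bar>h w\<bar> \<le> B"
  shows "(\<exists>g. huber_argmin M X Z \<alpha> \<tau> g)
    \<and> (\<forall>g g'. huber_argmin M X Z \<alpha> \<tau> g \<longrightarrow> huber_argmin M X Z \<alpha> \<tau> g'
          \<longrightarrow> (AE x in distr M borel X. g x = g' x))
    \<and> (\<forall>g. huber_argmin M X Z \<alpha> \<tau> g \<longrightarrow> (AE x in distr M borel X. \<alpha> * \<bar>g x - g\<^sub>0 x\<bar> \<le> B))"
proof (intro conjI allI impI huber_argmin_exists)
  fix g g' assume g: "huber_argmin M X Z \<alpha> \<tau> g"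
  then have [measurable]: "g \<in> borel_measurable borel" by (simp add: huber_argmin_def)
  have "AE w in M. \<alpha> * \<bar>g (X w) - g\<^sub>0 (X w)\<bar> \<le> B"
    using ae_eq_of_huber_argmin[OF g]
  proof eventually_elim
    case (elim w)
    then show ?case using alpha h_le[of w] by (simp add: abs_mult)
  qed
  then show "AE x in distr M borel X. \<alpha> * \<bar>g x - g\<^sub>0 x\<bar> \<le> B"
    by (subst AE_distr_iff) auto
  assume g': "huber_argmin M X Z \<alpha> \<tau> g'"
  then have [measurable]: "g' \<in> borel_measurable borel" by (simp add: huber_argmin_def)
  have "AE w in M. g (X w) = g' (X w)"
    using ae_eq_of_huber_argmin[OF g] ae_eq_of_huber_argmin[OF g']
  proof eventually_elim
    case (elim w)
    then have "\<alpha> * (g (X w) - g\<^sub>0 (X w)) = \<alpha> * (g' (X w) - g\<^sub>0 (X w))" by simp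
    then show ?case using alpha by simp
  qed
  then show "AE x in distr M borel X. g x = g' x"
    by (subst AE_distr_iff) auto
qed

end

end

end

theorem proposition2p1:
  fixes M :: "'a measure"
    and Y :: "'a \<Rightarrow> real"
    and X :: "'a \<Rightarrow> real ^ 'd"
    and f\<^sub>0 g\<^sub>0 :: "real ^ 'd \<Rightarrow> real"
    and \<alpha> p \<nu>\<^sub>p \<nu>\<^sub>2 \<tau> :: real
  defines "F \<equiv> sigma_of M X"
    and "\<epsilon>\<^sub>m \<equiv> (\<lambda>w. min (Y w - f\<^sub>0 (X w)) 0)"
  defines "\<omega> \<equiv> (\<lambda>w. \<epsilon>\<^sub>m w - real_cond_exp M F \<epsilon>\<^sub>m w)"
  assumes M: "prob_space M"
    and Y_meas: "Y \<in> borel_measurable M"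
    and X_meas: "X \<in> borel_measurable M"
    and X_range: "\<And>w. w \<in> space M \<Longrightarrow> X w \<in> cbox 0 1"
    and alpha: "0 < \<alpha>" "\<alpha> < 1"
    and f0_meas: "f\<^sub>0 \<in> borel_measurable borel"
    and g0_meas: "g\<^sub>0 \<in> borel_measurable borel"
    and quantile: "AE w in M. real_cond_exp M F (indicator {w. Y w \<le> f\<^sub>0 (X w)}) w = \<alpha>"
    and ES_integrable: "integrable M (\<lambda>w. Y w * indicator {w. Y w \<le> f\<^sub>0 (X w)} w)"
    and eps_integrable: "integrable M \<epsilon>\<^sub>m"
    and shortfall: "AE w in M. g\<^sub>0 (X w) =
           real_cond_exp M F (\<lambda>w. Y w * indicator {w. Y w \<le> f\<^sub>0 (X w)} w) w / \<alpha>"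
    and p: "p > 1"
    and nu_p: "\<nu>\<^sub>p > 0"
    and moment_p: "AE w in M. nn_cond_exp M F (\<lambda>w. ennreal (\<bar>\<omega> w\<bar> powr p)) w \<le> ennreal \<nu>\<^sub>p"
    and moment_2: "p \<ge> 2 \<Longrightarrow> \<nu>\<^sub>2 > 0 \<and>
           (AE w in M. nn_cond_exp M F (\<lambda>w. ennreal ((\<omega> w)\<^sup>2)) w \<le> ennreal \<nu>\<^sub>2)"
    and tau_pos: "\<tau> > 0"
    and tau_small_p: "p < 2 \<Longrightarrow> \<tau> \<ge> (4 * \<nu>\<^sub>p) powr (1 / p)"
    and tau_large_p: "p \<ge> 2 \<Longrightarrow> \<tau> \<ge> sqrt (4 * \<nu>\<^sub>2)"
  shows "(\<exists>g. huber_argmin M X (surrogate Y X \<alpha> f\<^sub>0) \<alpha> \<tau> g)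
       \<and> (\<forall>g h. huber_argmin M X (surrogate Y X \<alpha> f\<^sub>0) \<alpha> \<tau> g
               \<longrightarrow> huber_argmin M X (surrogate Y X \<alpha> f\<^sub>0) \<alpha> \<tau> h
               \<longrightarrow> (AE x in distr M borel X. g x = h x))
       \<and> (\<forall>g. huber_argmin M X (surrogate Y X \<alpha> f\<^sub>0) \<alpha> \<tau> g
               \<longrightarrow> (AE x in distr M borel X. \<alpha> * \<bar>g x - g\<^sub>0 x\<bar> \<le> 2 * \<nu>\<^sub>p * \<tau> powr (1 - p)))"
proof -
  have F_eq: "F = vimage_algebra (space M) X borel"
    unfolding \<open>F \<equiv> sigma_of M X\<close> sigma_of_def ..
  have eps_eq: "\<epsilon>\<^sub>m = (\<lambda>w. min (Y w - f\<^sub>0 (X w)) 0)"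
    using \<open>\<epsilon>\<^sub>m \<equiv> (\<lambda>w. min (Y w - f\<^sub>0 (X w)) 0)\<close> by simp
  have omega_eq: "\<omega> = (\<lambda>w. \<epsilon>\<^sub>m w - real_cond_exp M F \<epsilon>\<^sub>m w)"
    using \<open>\<omega> \<equiv> (\<lambda>w. \<epsilon>\<^sub>m w - real_cond_exp M F \<epsilon>\<^sub>m w)\<close> by simp
  interpret prob_space M by (rule M)
  interpret finite_measure_subalgebra M F
    unfolding F_eq by (rule finite_measure_subalgebra_vimage_algebra[OF X_meas])
  have "integrable M \<omega>" unfolding omega_eq using eps_integrable by auto
  then interpret huber_problem M F \<omega> \<tau> by unfold_locales (use tau_pos in auto)
  have f0X: "(\<lambda>w. f\<^sub>0 (X w)) \<in> borel_measurable F"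
    unfolding F_eq by (rule measurable_vimage_algebra_compose[OF _ f0_meas]) auto
  from real_cond_exp_min_diff_0[OF Y_meas f0X ES_integrable eps_integrable[unfolded eps_eq] quantile]
    shortfall
  have Z_eq: "AE w in M. surrogate Y X \<alpha> f\<^sub>0 w = \<alpha> * g\<^sub>0 (X w) + \<omega> w"
    by eventually_elim (use alpha in \<open>simp add: surrogate_def omega_eq eps_eq\<close>)
  have "AE w in M. real_cond_exp M F \<omega> w = 0"
    unfolding omega_eq by (rule real_cond_exp_centered[OF eps_integrable])
  from huber_bracket_of_moments[OF this p nu_p moment_p moment_2 tau_small_p tau_large_p]
  obtain L where "huber_bracket M F \<omega> \<tau> L" "cond_tail_lt_one (\<tau> - L)"
    and L_le: "L \<le> 2 * \<nu>\<^sub>p * \<tau> powr (1 - p)" .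
  then interpret huber_bracket M F \<omega> \<tau> L by simp
  obtain h where h: "h \<in> borel_measurable F" "\<And>w. \<bar>h w\<bar> \<le> L"
    and h_min: "\<And>u. u \<in> borel_measurable F \<Longrightarrow> risk h \<le> risk u"
    and h_unique: "\<And>u. u \<in> borel_measurable F \<Longrightarrow> risk u \<le> risk h \<Longrightarrow> AE w in M. u w = h w"
    using cond_huber_minimiser[OF \<open>cond_tail_lt_one (\<tau> - L)\<close>] by blast
  have "\<bar>h w\<bar> \<le> 2 * \<nu>\<^sub>p * \<tau> powr (1 - p)" for w using h(2)[of w] L_le by linarith
  with h(1) h_min h_unique show ?thesis
    by (rule huber_argmin_of_cond_minimiser[OF F_eq X_meas alpha(1) g0_meas Z_eq])
qed

end
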